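(* Up to shifting and reversing indices, there is exactly one 4-chain having three consecutive equal terms, namely the 4-chain $(u_n)$ with $u_0=u_1=u_2=u_3=-1$ (whose neighbouring terms are $u_{-1}=u_4=1$, $u_{-2}=u_5=-3$, $u_{-3}=u_6=-17$, $u_{-4}=u_7=1541,\dots$).
   Context: A 4-chain is a bi-infinite sequence of integers $(u_n)_{n\in\mathbb Z}$ satisfying $u_{n-1}u_{n+1}=u_n^3+u_n^{f(n)}+1$ for all $n\in\mathbb Z$, where $f(n)=1$ if $n\equiv 0,3\pmod 4$ and $f(n)=2$ if $n\equiv 1,2\pmod 4$. Two 4-chains $(u_n)$, $(v_n)$ are considered the same if there is $k\in\mathbb Z$ with $u_n=v_{k+n}$ for all $n$ or $u_n=v_{k-n}$ for all $n$. *)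

theory Defs
  imports Main
begin

definition chain_exp :: "int \<Rightarrow> nat" where
  "chain_exp n = (if n mod 4 = 0 \<or> n mod 4 = 3 then 1 else 2)"

definition four_chain :: "(int \<Rightarrow> int) \<Rightarrow> bool" where
  "four_chain u \<longleftrightarrow>
     (\<forall>n. u (n - 1) * u (n + 1) = u n ^ 3 + u n ^ chain_exp n + 1)"

definition same_chain :: "(int \<Rightarrow> int) \<Rightarrow> (int \<Rightarrow> int) \<Rightarrow> bool" where
  "same_chain u v \<longleftrightarrow>
     (\<exists>k. (\<forall>n. u n = v (k + n)) \<or> (\<forall>n. u n = v (k - n)))"

definition three_consecutive_equal :: "(int \<Rightarrow> int) \<Rightarrow> bool" where
  "three_consecutive_equal u \<longleftrightarrow> (\<exists>m. u m = u (m + 1) \<and> u (m + 1) = u (m + 2))"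

end

theory Submission
  imports Defs
begin

text \<open>
  Existence: the recurrence run forward from u(0) = u(1) = -1 stays integral, because with
  x = u(n-1), y = u(n), z = u(n+1) the relation x z = 1 (mod y) together with
  y | x^3 + x^b + 1 forces y | z^3 + z^a + 1 whenever a + b = 3, as y is prime to x.
  Since u(2) = u(3) = -1 as well and the exponent pattern is symmetric under n \<mapsto> 3 - n,
  mirroring the forward half gives a 4-chain.

  Uniqueness: the terms never vanish, so a 4-chain is determined by any two consecutive
  terms. Three equal terms c, c, c force c^2 = c^3 + c^e + 1, whose only integral solution
  is c = -1 with e = 2; this pins down the position modulo 4 up to the reflection.
\<close>

definition chain_rhs :: "int \<Rightarrow> int \<Rightarrow> int" where
  "chain_rhs n x = x ^ 3 + x ^ chain_exp n + 1"

lemma four_chain_iff_chain_rhs: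
  "four_chain u \<longleftrightarrow> (\<forall>n. u (n - 1) * u (n + 1) = chain_rhs n (u n))"
  by (simp add: four_chain_def chain_rhs_def)

lemma chain_exp_cases: "chain_exp n = 1 \<or> chain_exp n = 2"
  by (simp add: chain_exp_def)

lemma chain_exp_add_2: "chain_exp n + chain_exp (n + 2) = 3"
  unfolding chain_exp_def by presburger

lemma chain_exp_reflect: "chain_exp (3 - n) = chain_exp n"
  unfolding chain_exp_def by presburger

lemma chain_exp_periodic: "c mod 4 = 0 \<Longrightarrow> chain_exp (n + c) = chain_exp n"
  unfolding chain_exp_def by presburger

lemma chain_exp_eq_2_iff: "chain_exp n = 2 \<longleftrightarrow> n mod 4 = 1 \<or> n mod 4 = 2"
  unfolding chain_exp_def by presburger

lemma int_unit_factor: "(a::int) * b = -1 \<Longrightarrow> a = 1 \<or> a = -1"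
  by (auto simp: zmult_eq_neg1_iff)

lemma chain_rhs_nonzero: "chain_rhs n x \<noteq> 0"
proof
  assume h: "chain_rhs n x = 0"
  have "x * (x ^ 2 + x ^ (chain_exp n - 1)) = -1"
    using h chain_exp_cases[of n]
    by (auto simp: chain_rhs_def power2_eq_square power3_eq_cube algebra_simps)
  then have "x = 1 \<or> x = -1" by (rule int_unit_factor)
  with h chain_exp_cases[of n] show False by (auto simp: chain_rhs_def)
qed

lemma chain_rhs_fixed_point:
  assumes "c * c = chain_rhs n c"
  shows "c = -1 \<and> chain_exp n = 2"
proof -
  have "c * (c ^ 2 - c + c ^ (chain_exp n - 1)) = -1"
    using assms chain_exp_cases[of n]
    by (auto simp: chain_rhs_def power2_eq_square power3_eq_cube algebra_simps)
  then have "c = 1 \<or> c = -1" by (rule int_unit_factor)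
  with assms chain_exp_cases[of n] show ?thesis by (auto simp: chain_rhs_def)
qed

lemma dvd_complementary_rhs:
  fixes x y z :: int
  assumes xz: "y dvd x * z - 1" and x: "y dvd x ^ 3 + x ^ b + 1"
    and ab: "a + b = 3" "a = 1 \<or> a = 2"
  shows "y dvd z ^ 3 + z ^ a + 1"
proof -
  have "coprime y x"
  proof (rule coprimeI)
    fix d assume "d dvd y" "d dvd x"
    then have "d dvd x * z - (x * z - 1)" using xz by (metis dvd_diff dvd_mult2 dvd_trans)
    then show "is_unit d" by simp
  qed
  obtain e where "x ^ 3 * (z ^ 3 + z ^ a + 1) = (x ^ 3 + x ^ b + 1) + (x * z - 1) * e"
  proof (cases "a = 1")
    case True
    with ab have "x ^ 3 * (z ^ 3 + z ^ a + 1)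
        = (x ^ 3 + x ^ b + 1) + (x * z - 1) * ((x * z) ^ 2 + x * z + 1 + x ^ 2)"
      by (simp add: algebra_simps power2_eq_square power3_eq_cube)
    then show ?thesis by (rule that)
  next
    case False
    with ab have "x ^ 3 * (z ^ 3 + z ^ a + 1)
        = (x ^ 3 + x ^ b + 1) + (x * z - 1) * ((x * z) ^ 2 + x * z + 1 + x * (x * z + 1))"
      by (auto simp: algebra_simps power2_eq_square power3_eq_cube)
    then show ?thesis by (rule that)
  qed
  then have "y dvd x ^ 3 * (z ^ 3 + z ^ a + 1)"
    using xz x by simp
  with \<open>coprime y x\<close> show ?thesis by (simp add: coprime_dvd_mult_right_iff)
qed

fun chain_seq :: "nat \<Rightarrow> int" where
  "chain_seq 0 = -1"
| "chain_seq (Suc 0) = -1"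
| "chain_seq (Suc (Suc k)) = chain_rhs (int k + 1) (chain_seq (Suc k)) div chain_seq k"

lemma chain_seq_integral:
  "chain_seq k \<noteq> 0 \<and> chain_seq k dvd chain_rhs (int k + 1) (chain_seq (Suc k))
     \<and> chain_seq (Suc k) dvd chain_rhs (int k) (chain_seq k)"
proof (induction k)
  case 0
  then show ?case by simp
next
  case (Suc k)
  define x y z where "x = chain_seq k" and "y = chain_seq (Suc k)" and "z = chain_seq (Suc (Suc k))"
  have xz: "x * z = chain_rhs (int k + 1) y"
    using Suc by (simp add: x_def y_def z_def)
  have "y dvd x * z - 1"
    using xz chain_exp_cases[of "int k + 1"] by (auto simp: chain_rhs_def power3_eq_cube power2_eq_square)
  moreover have "y dvd x ^ 3 + x ^ chain_exp (int k) + 1"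
    using Suc by (simp add: x_def y_def chain_rhs_def)
  ultimately have "y dvd z ^ 3 + z ^ chain_exp (int k + 2) + 1"
    by (rule dvd_complementary_rhs) (use chain_exp_add_2[of "int k"] chain_exp_cases[of "int k + 2"] in auto)
  moreover have "int (Suc k) + 1 = int k + 2" by simp
  ultimately have "y dvd chain_rhs (int (Suc k) + 1) z"
    by (simp only: chain_rhs_def)
  moreover have "z dvd chain_rhs (int (Suc k)) y"
    using xz by (metis dvd_triv_right of_nat_Suc add.commute)
  moreover have "y \<noteq> 0"
    using Suc chain_rhs_nonzero[of "int k" x] by (auto simp: x_def y_def)
  ultimately show ?case by (simp add: y_def z_def)
qed

lemma chain_seq_rec: "chain_seq k * chain_seq (Suc (Suc k)) = chain_rhs (int k + 1) (chain_seq (Suc k))"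
  using chain_seq_integral[of k] by simp

lemma chain_seq_2_3: "chain_seq 2 = -1" "chain_seq 3 = -1"
  by (simp_all add: numeral_eq_Suc chain_rhs_def chain_exp_def)

definition chain_ref :: "int \<Rightarrow> int" where
  "chain_ref n = (if n \<ge> 0 then chain_seq (nat n) else chain_seq (nat (3 - n)))"

lemma chain_ref_0_3: "chain_ref 0 = -1" "chain_ref 1 = -1" "chain_ref 2 = -1" "chain_ref 3 = -1"
  by (simp_all add: chain_ref_def chain_seq_2_3)

lemma chain_ref_reflect: "chain_ref (3 - n) = chain_ref n"
proof -
  consider "n < 0" | "n > 3" | "n = 0" | "n = 1" | "n = 2" | "n = 3" by linarith
  then show ?thesis by cases (auto simp: chain_ref_def chain_seq_2_3)
qed

lemma chain_ref_rec_pos: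
  assumes "n \<ge> 1"
  shows "chain_ref (n - 1) * chain_ref (n + 1) = chain_rhs n (chain_ref n)"
proof -
  obtain k where k: "n = int k + 1"
    using assms by (metis add.commute nat_int_add zle_iff_zadd)
  then have "nat (n + 1) = Suc (Suc k)" "nat n = Suc k" by auto
  with chain_seq_rec[of k] k show ?thesis by (simp add: chain_ref_def)
qed

lemma four_chain_chain_ref: "four_chain chain_ref"
  unfolding four_chain_iff_chain_rhs
proof
  fix n
  show "chain_ref (n - 1) * chain_ref (n + 1) = chain_rhs n (chain_ref n)"
  proof (cases "n \<ge> 1")
    case True
    then show ?thesis by (rule chain_ref_rec_pos)
  next
    case False
    then have "chain_ref (3 - n - 1) * chain_ref (3 - n + 1) = chain_rhs (3 - n) (chain_ref (3 - n))"
      by (intro chain_ref_rec_pos) simp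
    moreover have "chain_ref (3 - n - 1) = chain_ref (n + 1)" "chain_ref (3 - n + 1) = chain_ref (n - 1)"
      using chain_ref_reflect[of "n + 1"] chain_ref_reflect[of "n - 1"] by (simp_all add: algebra_simps)
    ultimately show ?thesis
      by (simp add: chain_rhs_def chain_ref_reflect chain_exp_reflect mult.commute)
  qed
qed

lemma four_chain_nonzero:
  assumes "four_chain v"
  shows "v n \<noteq> 0"
proof
  assume "v n = 0"
  moreover have "v n * v (n + 2) = chain_rhs (n + 1) (v (n + 1))"
    using assms unfolding four_chain_iff_chain_rhs by (metis add_diff_cancel_right' add.assoc one_add_one)
  ultimately show False using chain_rhs_nonzero by simp
qed

lemma four_chain_shift:
  assumes "four_chain v" "c mod 4 = 0"
  shows "four_chain (\<lambda>n. v (n + c))"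
  unfolding four_chain_iff_chain_rhs
proof
  fix n
  have "v (n + c - 1) * v (n + c + 1) = chain_rhs (n + c) (v (n + c))"
    using assms(1) unfolding four_chain_iff_chain_rhs by blast
  then show "v (n - 1 + c) * v (n + 1 + c) = chain_rhs n (v (n + c))"
    using chain_exp_periodic[OF assms(2), of n] by (simp add: chain_rhs_def algebra_simps)
qed

lemma four_chain_eqI:
  assumes v: "four_chain v" and w: "four_chain w"
    and "v a = w a" and "v (a + 1) = w (a + 1)"
  shows "v n = w n"
proof -
  have rec: "v (i - 1) * v (i + 1) = w (i - 1) * w (i + 1)" if "v i = w i" for i
    using v w that unfolding four_chain_iff_chain_rhs by metis
  have "v n = w n \<and> v (n + 1) = w (n + 1)"
  proof (induction n rule: int_induct[where k = a])
    case base
    then show ?case using assms by simp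
  next
    case (step1 i)
    then show ?case
      using rec[of "i + 1"] four_chain_nonzero[OF v, of i] by (simp add: add.assoc)
  next
    case (step2 i)
    then show ?case
      using rec[of i] four_chain_nonzero[OF v, of "i + 1"] by simp
  qed
  then show ?thesis ..
qed

lemma three_consecutive_equal_position:
  assumes "four_chain v" "v m = v (m + 1)" "v (m + 1) = v (m + 2)"
  shows "v m = -1 \<and> (m mod 4 = 0 \<or> m mod 4 = 1)"
proof -
  have "v (m + 1 - 1) * v (m + 1 + 1) = chain_rhs (m + 1) (v (m + 1))"
    using assms(1) unfolding four_chain_iff_chain_rhs by blast
  then have "v (m + 1) * v (m + 1) = chain_rhs (m + 1) (v (m + 1))"
    using assms(2,3) by (simp add: add.assoc)
  from chain_rhs_fixed_point[OF this] assms(2) show ?thesis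
    unfolding chain_exp_eq_2_iff by presburger
qed

lemma same_chain_chain_ref:
  assumes v: "four_chain v" and "v m = -1" "v (m + 1) = -1" and "m mod 4 = 0 \<or> m mod 4 = 1"
  shows "same_chain v chain_ref"
proof -
  define k where "k = (if m mod 4 = 0 then - m else 1 - m)"
  have k: "k mod 4 = 0" "m + k = 0 \<or> m + k = 1"
    using assms(4) unfolding k_def by presburger+
  have "four_chain (\<lambda>n. chain_ref (n + k))"
    using k by (intro four_chain_shift four_chain_chain_ref)
  moreover have "chain_ref (m + k) = -1" "chain_ref (m + 1 + k) = -1"
    using chain_ref_0_3 k(2) by (auto simp: algebra_simps)
  ultimately have "v n = chain_ref (n + k)" for n
    using four_chain_eqI[OF v, of _ m] assms by simp
  then show ?thesis unfolding same_chain_def by (metis add.commute)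
qed

theorem mainTheorem8:
  shows "\<exists>u. four_chain u \<and> u 0 = -1 \<and> u 1 = -1 \<and> u 2 = -1 \<and> u 3 = -1 \<and>
           (\<forall>v. four_chain v \<longrightarrow> (three_consecutive_equal v \<longleftrightarrow> same_chain v u))"
proof (intro exI conjI allI impI iffI)
  show "four_chain chain_ref" by (rule four_chain_chain_ref)
  show "chain_ref 0 = -1" "chain_ref 1 = -1" "chain_ref 2 = -1" "chain_ref 3 = -1"
    by (rule chain_ref_0_3)+
  fix v assume v: "four_chain v"
  {
    assume "three_consecutive_equal v"
    then obtain m where "v m = v (m + 1)" "v (m + 1) = v (m + 2)"
      unfolding three_consecutive_equal_def by blast
    with three_consecutive_equal_position[OF v] same_chain_chain_ref[OF v]
    show "same_chain v chain_ref" by metis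
  }
  {
    assume "same_chain v chain_ref"
    then obtain k where "(\<forall>n. v n = chain_ref (k + n)) \<or> (\<forall>n. v n = chain_ref (k - n))"
      unfolding same_chain_def by blast
    then have "v (-k) = v (-k + 1) \<and> v (-k + 1) = v (-k + 2)
             \<or> v (k - 2) = v (k - 2 + 1) \<and> v (k - 2 + 1) = v (k - 2 + 2)"
      by (auto simp: chain_ref_0_3)
    then show "three_consecutive_equal v"
      unfolding three_consecutive_equal_def by blast
  }
qed

end
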